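(* Let $I,J\in\mathbb{I}_{m,n}$ and suppose $I^{cc}_0\subseteq J_0$. Then $I\le J$.
   Context: For integers $m,n\ge1$, $G_{m,n}$ is the equioriented commutative $m\times n$ grid: the quiver with vertex set $\{(i,j):1\le i\le m,\ 1\le j\le n\}$ and arrows $(i,j)\to(i,j+1)$ and $(i,j)\to(i+1,j)$, bound by all commutativity relations. An interval of $G_{m,n}$ is a nonempty full subquiver $I$ which is connected (as an undirected graph) and convex (whenever $x,y\in I_0$ and there are paths $x\to z$ and $z\to y$ in $G_{m,n}$, then $z\in I_0$); $I_0$ denotes its vertex set. $\mathbb{I}_{m,n}$ is the set of intervals, partially ordered by $I\le J\iff I_0\subseteq J_0$. For $I\in\mathbb{I}_{m,n}$, $I^{ss}_0$ is the set of vertices of $I$ that are sources or sinks of the quiver $I$, and $I^{cc}_0=I_0\cap(\mathrm{pr}_1(I^{ss}_0)\times\mathrm{pr}_2(I^{ss}_0))$, where $\mathrm{pr}_1,\mathrm{pr}_2$ are the projections to the first and second coordinates. *)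

theory Defs
  imports Main
begin

type_synonym vertex = "nat \<times> nat"

definition grid_vertices :: "nat \<Rightarrow> nat \<Rightarrow> vertex set" where
  "grid_vertices m n = {1..m} \<times> {1..n}"

definition grid_arrow :: "nat \<Rightarrow> nat \<Rightarrow> vertex \<Rightarrow> vertex \<Rightarrow> bool" where
  "grid_arrow m n x y \<longleftrightarrow> x \<in> grid_vertices m n \<and> y \<in> grid_vertices m n \<and>
     ((fst y = fst x \<and> snd y = Suc (snd x)) \<or> (fst y = Suc (fst x) \<and> snd y = snd x))"

definition grid_path :: "nat \<Rightarrow> nat \<Rightarrow> vertex \<Rightarrow> vertex \<Rightarrow> bool" where
  "grid_path m n x y \<longleftrightarrow> (grid_arrow m n)\<^sup>*\<^sup>* x y"

definition undirected_connected :: "nat \<Rightarrow> nat \<Rightarrow> vertex set \<Rightarrow> bool" where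
  "undirected_connected m n S \<longleftrightarrow>
     (\<forall>x\<in>S. \<forall>y\<in>S. (\<lambda>a b. a \<in> S \<and> b \<in> S \<and> (grid_arrow m n a b \<or> grid_arrow m n b a))\<^sup>*\<^sup>* x y)"

definition convex_set :: "nat \<Rightarrow> nat \<Rightarrow> vertex set \<Rightarrow> bool" where
  "convex_set m n S \<longleftrightarrow>
     (\<forall>x\<in>S. \<forall>y\<in>S. \<forall>z. grid_path m n x z \<and> grid_path m n z y \<longrightarrow> z \<in> S)"

text \<open>Intervals of G_{m,n}, identified with their vertex sets (full subquivers).\<close>
definition is_interval :: "nat \<Rightarrow> nat \<Rightarrow> vertex set \<Rightarrow> bool" where
  "is_interval m n S \<longleftrightarrow> S \<noteq> {} \<and> S \<subseteq> grid_vertices m n \<and>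
     undirected_connected m n S \<and> convex_set m n S"

definition is_source :: "nat \<Rightarrow> nat \<Rightarrow> vertex set \<Rightarrow> vertex \<Rightarrow> bool" where
  "is_source m n S x \<longleftrightarrow> x \<in> S \<and> \<not> (\<exists>y\<in>S. grid_arrow m n y x)"

definition is_sink :: "nat \<Rightarrow> nat \<Rightarrow> vertex set \<Rightarrow> vertex \<Rightarrow> bool" where
  "is_sink m n S x \<longleftrightarrow> x \<in> S \<and> \<not> (\<exists>y\<in>S. grid_arrow m n x y)"

definition ss_vertices :: "nat \<Rightarrow> nat \<Rightarrow> vertex set \<Rightarrow> vertex set" where
  "ss_vertices m n S = {x. is_source m n S x \<or> is_sink m n S x}"

definition cc_vertices :: "nat \<Rightarrow> nat \<Rightarrow> vertex set \<Rightarrow> vertex set" where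
  "cc_vertices m n S = S \<inter> (fst ` ss_vertices m n S \<times> snd ` ss_vertices m n S)"

end

theory Submission
  imports Defs
begin

text \<open>Every vertex x of I lies on a grid path from a source of I to a sink of I: take a vertex
  of I of minimal (resp. maximal) level i + j among those below (resp. above) x. Sources and
  sinks belong to I^cc, hence to J, and convexity of J then forces x into J.\<close>

lemma grid_arrow_level: "grid_arrow m n x y \<Longrightarrow> fst y + snd y = Suc (fst x + snd x)"
  unfolding grid_arrow_def by auto

lemma grid_arrow_level_le: "grid_arrow m n x y \<Longrightarrow> fst y + snd y \<le> m + n"
  unfolding grid_arrow_def grid_vertices_def by (auto simp: mem_Times_iff)

lemma source_grid_path_exists:
  assumes "x \<in> S"
  shows "\<exists>s. is_source m n S s \<and> grid_path m n s x"
proof -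
  obtain s where s: "s \<in> S" "grid_path m n s x"
    and least: "\<And>y. y \<in> S \<Longrightarrow> grid_path m n y x \<Longrightarrow> fst s + snd s \<le> fst y + snd y"
    using ex_has_least_nat[of "\<lambda>y. y \<in> S \<and> grid_path m n y x" x "\<lambda>y. fst y + snd y"] assms
    unfolding grid_path_def by auto
  have "is_source m n S s"
    unfolding is_source_def
  proof (intro conjI notI)
    assume "\<exists>y\<in>S. grid_arrow m n y s"
    then obtain y where y: "y \<in> S" "grid_arrow m n y s" by blast
    with s(2) have "grid_path m n y x"
      unfolding grid_path_def by (meson converse_rtranclp_into_rtranclp)
    with least y grid_arrow_level[OF y(2)] show False by fastforce
  qed (use s in simp)
  with s show ?thesis by blast
qed

lemma sink_grid_path_exists:
  assumes "x \<in> S"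
  shows "\<exists>t. is_sink m n S t \<and> grid_path m n x t"
proof -
  obtain t where t: "t \<in> S" "grid_path m n x t"
    and greatest: "\<And>y. y \<in> S \<Longrightarrow> grid_path m n x y \<Longrightarrow>
                      (m + n) - (fst t + snd t) \<le> (m + n) - (fst y + snd y)"
    using ex_has_least_nat[of "\<lambda>y. y \<in> S \<and> grid_path m n x y" x
                              "\<lambda>y. (m + n) - (fst y + snd y)"] assms
    unfolding grid_path_def by auto
  have "is_sink m n S t"
    unfolding is_sink_def
  proof (intro conjI notI)
    assume "\<exists>y\<in>S. grid_arrow m n t y"
    then obtain y where y: "y \<in> S" "grid_arrow m n t y" by blast
    with t(2) have "grid_path m n x y"
      unfolding grid_path_def by (meson rtranclp.rtrancl_into_rtrancl)
    with greatest y grid_arrow_level[OF y(2)] grid_arrow_level_le[OF y(2)] show False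
      by fastforce
  qed (use t in simp)
  with t show ?thesis by blast
qed

lemma ss_vertices_subset_cc_vertices: "ss_vertices m n S \<subseteq> cc_vertices m n S"
  unfolding cc_vertices_def ss_vertices_def is_source_def is_sink_def by force

theorem mainTheorem6:
  fixes m n :: nat and I J :: "vertex set"
  assumes "1 \<le> m" and "1 \<le> n"
    and "is_interval m n I" and "is_interval m n J"
    and "cc_vertices m n I \<subseteq> J"
  shows "I \<subseteq> J"
proof
  fix x assume "x \<in> I"
  obtain s t where s: "is_source m n I s" "grid_path m n s x"
    and t: "is_sink m n I t" "grid_path m n x t"
    using source_grid_path_exists[OF \<open>x \<in> I\<close>] sink_grid_path_exists[OF \<open>x \<in> I\<close>] by blast
  have "s \<in> J" "t \<in> J"
    using s(1) t(1) ss_vertices_subset_cc_vertices assms(5) unfolding ss_vertices_def by blast+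
  with s(2) t(2) \<open>is_interval m n J\<close> show "x \<in> J"
    unfolding is_interval_def convex_set_def by blast
qed

end
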